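(* Assume $\mathfrak g$ is semisimple, $\Omega$ is a strongly dominant prime ideal of $\mathcal S$ and $\lambda=\lambda_\Omega$, and let $\rho'=\frac12\sum_{\alpha\in R_\lambda^+}\alpha$. If $w\in W$ satisfies $w(R_\lambda)=R_\lambda$ and $w(B_\lambda)\not\subseteq R_\lambda^+$, then in $\mathcal S$ we have $w.h_{\rho'}=wh_{\rho'}-c$ for some constant $c\in F$ with $c>0$ (indeed $c$ is a positive rational number).
   Context: $F$ is an algebraically closed field of characteristic zero; $\mathfrak g$ is a semisimple Lie algebra over $F$ with Cartan subalgebra $\mathfrak h$, root system $R$, positive system $R^+$ with simple roots $B$, Weyl group $W$, $\rho=\frac12\sum_{\alpha\in R^+}\alpha$, dot action $w.\xi=w(\xi+\rho)-\rho$. $\kappa$ is the Killing form, $h_\mu\in\mathfrak h$ is defined by $\kappa(h_\mu,h)=\mu(h)$, and $H_\alpha$ is the coroot of $\alpha$. $\mathcal S=S(\mathfrak h)$ is identified with polynomial functions on $\mathfrak h^*$, with $(w.f)(\xi)=f(w^{-1}.\xi)$, and $wh$ denotes the linear action on $\mathfrak h$. For a prime $\Omega$, $\mathbb F$ is the fraction field of $\mathcal S/\Omega$, $\lambda_\Omega$ the $\mathbb F$-linear extension of $\mathfrak h\hookrightarrow\mathcal S\to\mathcal S/\Omega\hookrightarrow\mathbb F$. $P^+$ is the set of dominant integral weights; $\Omega$ is strongly dominant if $\mathcal V(\Omega)\cap P^+$ is Zariski dense in the zero set $\mathcal V(\Omega)$. For $\lambda=\lambda_\Omega$: $R_\lambda=\{\alpha\in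 R: H_\alpha-n\in\Omega\text{ for some }n\in\mathbb Z\}$, $R_\lambda^+=R^+\cap R_\lambda$, $B_\lambda$ the simple roots of $R_\lambda$ in $R_\lambda^+$. *)

theory Defs
  imports Main "HOL-Computational_Algebra.Polynomial"
begin

text \<open>Model: the Cartan subalgebra h and its dual h* are both represented as
  coordinate spaces 'n => 'f (with 'n a finite index type), paired by
  pair xi h = sum_i xi i * h i.  The semisimple Lie algebra enters only through
  its root system R in h* (w.r.t. the Cartan subalgebra h).\<close>

definition pair :: "('n::finite \<Rightarrow> 'f::field_char_0) \<Rightarrow> ('n \<Rightarrow> 'f) \<Rightarrow> 'f" where
  "pair xi h = (\<Sum>i\<in>UNIV. xi i * h i)"

definition vscale :: "'f::field_char_0 \<Rightarrow> ('n \<Rightarrow> 'f) \<Rightarrow> ('n \<Rightarrow> 'f)" where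
  "vscale c v = (\<lambda>i. c * v i)"

definition vadd :: "('n \<Rightarrow> 'f::field_char_0) \<Rightarrow> ('n \<Rightarrow> 'f) \<Rightarrow> ('n \<Rightarrow> 'f)" where
  "vadd u v = (\<lambda>i. u i + v i)"

definition vsub :: "('n \<Rightarrow> 'f::field_char_0) \<Rightarrow> ('n \<Rightarrow> 'f) \<Rightarrow> ('n \<Rightarrow> 'f)" where
  "vsub u v = (\<lambda>i. u i - v i)"

definition vsum :: "('a \<Rightarrow> 'n \<Rightarrow> 'f::field_char_0) \<Rightarrow> 'a set \<Rightarrow> ('n \<Rightarrow> 'f)" where
  "vsum f A = (\<lambda>i. \<Sum>a\<in>A. f a i)"

definition alg_closed_type :: "'f::field itself \<Rightarrow> bool" where
  "alg_closed_type _ \<longleftrightarrow> (\<forall>p :: 'f poly. degree p \<ge> 1 \<longrightarrow> (\<exists>x. poly p x = 0))"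

text \<open>Killing form restricted to h: kappa(h,h') = tr(ad h ad h') = sum over roots.\<close>
definition kappa :: "('n::finite \<Rightarrow> 'f::field_char_0) set \<Rightarrow> ('n \<Rightarrow> 'f) \<Rightarrow> ('n \<Rightarrow> 'f) \<Rightarrow> 'f" where
  "kappa R h h' = (\<Sum>\<alpha>\<in>R. pair \<alpha> h * pair \<alpha> h')"

definition hof :: "('n::finite \<Rightarrow> 'f::field_char_0) set \<Rightarrow> ('n \<Rightarrow> 'f) \<Rightarrow> ('n \<Rightarrow> 'f)" where
  "hof R \<mu> = (THE x. \<forall>h. kappa R x h = pair \<mu> h)"

definition coroot :: "('n::finite \<Rightarrow> 'f::field_char_0) set \<Rightarrow> ('n \<Rightarrow> 'f) \<Rightarrow> ('n \<Rightarrow> 'f)" where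
  "coroot R \<alpha> = vscale (2 / kappa R (hof R \<alpha>) (hof R \<alpha>)) (hof R \<alpha>)"

definition root_system :: "('n::finite \<Rightarrow> 'f::field_char_0) set \<Rightarrow> bool" where
  "root_system R \<longleftrightarrow> finite R \<and> (\<lambda>i. 0) \<notin> R \<and>
     (\<forall>\<xi>. \<exists>c. \<xi> = vsum (\<lambda>\<alpha>. vscale (c \<alpha>) \<alpha>) R) \<and>
     (\<forall>\<alpha>\<in>R. \<forall>c. vscale c \<alpha> \<in> R \<longrightarrow> c = 1 \<or> c = -1) \<and>
     (\<forall>\<alpha>\<in>R. \<exists>H. pair \<alpha> H = 2 \<and>
        (\<forall>\<beta>\<in>R. pair \<beta> H \<in> \<int> \<and> vsub \<beta> (vscale (pair \<beta> H) \<alpha>) \<in> R))"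

definition is_base :: "('n::finite \<Rightarrow> 'f::field_char_0) set \<Rightarrow> ('n \<Rightarrow> 'f) set \<Rightarrow> bool" where
  "is_base R B \<longleftrightarrow> B \<subseteq> R \<and>
     (\<forall>c. vsum (\<lambda>\<alpha>. vscale (c \<alpha>) \<alpha>) B = (\<lambda>i. 0) \<longrightarrow> (\<forall>\<alpha>\<in>B. c \<alpha> = 0)) \<and>
     (\<forall>\<beta>\<in>R. \<exists>k :: ('n \<Rightarrow> 'f) \<Rightarrow> int. \<beta> = vsum (\<lambda>\<alpha>. vscale (of_int (k \<alpha>)) \<alpha>) B \<and>
        ((\<forall>\<alpha>\<in>B. k \<alpha> \<ge> 0) \<or> (\<forall>\<alpha>\<in>B. k \<alpha> \<le> 0)))"

definition pos_roots :: "('n::finite \<Rightarrow> 'f::field_char_0) set \<Rightarrow> ('n \<Rightarrow> 'f) set \<Rightarrow> ('n \<Rightarrow> 'f) set" where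
  "pos_roots R B = {\<beta>\<in>R. \<exists>k :: ('n \<Rightarrow> 'f) \<Rightarrow> int. \<beta> = vsum (\<lambda>\<alpha>. vscale (of_int (k \<alpha>)) \<alpha>) B \<and>
        (\<forall>\<alpha>\<in>B. k \<alpha> \<ge> 0)}"

definition halfsum :: "('n::finite \<Rightarrow> 'f::field_char_0) set \<Rightarrow> ('n \<Rightarrow> 'f)" where
  "halfsum A = vscale (1/2) (vsum (\<lambda>\<alpha>. \<alpha>) A)"

definition refl :: "('n::finite \<Rightarrow> 'f::field_char_0) set \<Rightarrow> ('n \<Rightarrow> 'f) \<Rightarrow> ('n \<Rightarrow> 'f) \<Rightarrow> ('n \<Rightarrow> 'f)" where
  "refl R \<alpha> \<xi> = vsub \<xi> (vscale (pair \<xi> (coroot R \<alpha>)) \<alpha>)"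

inductive_set weyl :: "('n::finite \<Rightarrow> 'f::field_char_0) set \<Rightarrow> (('n \<Rightarrow> 'f) \<Rightarrow> ('n \<Rightarrow> 'f)) set"
  for R where
  weyl_id: "id \<in> weyl R"
| weyl_step: "w \<in> weyl R \<Longrightarrow> \<alpha> \<in> R \<Longrightarrow> refl R \<alpha> \<circ> w \<in> weyl R"

definition dot :: "('n::finite \<Rightarrow> 'f::field_char_0) set \<Rightarrow> ('n \<Rightarrow> 'f) set \<Rightarrow>
    (('n \<Rightarrow> 'f) \<Rightarrow> ('n \<Rightarrow> 'f)) \<Rightarrow> ('n \<Rightarrow> 'f) \<Rightarrow> ('n \<Rightarrow> 'f)" where
  "dot R B w \<xi> = vsub (w (vadd \<xi> (halfsum (pos_roots R B)))) (halfsum (pos_roots R B))"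

text \<open>S = S(h) as the ring of polynomial functions on h* (F is infinite, so this is
  isomorphic to the symmetric algebra). h embeds via h |-> (xi |-> xi(h)).\<close>
inductive_set polyfun :: "(('n::finite \<Rightarrow> 'f::field_char_0) \<Rightarrow> 'f) set" where
  pf_const: "(\<lambda>\<xi>. c) \<in> polyfun"
| pf_coord: "(\<lambda>\<xi>. \<xi> i) \<in> polyfun"
| pf_add: "f \<in> polyfun \<Longrightarrow> g \<in> polyfun \<Longrightarrow> (\<lambda>\<xi>. f \<xi> + g \<xi>) \<in> polyfun"
| pf_mult: "f \<in> polyfun \<Longrightarrow> g \<in> polyfun \<Longrightarrow> (\<lambda>\<xi>. f \<xi> * g \<xi>) \<in> polyfun"

definition as_S :: "('n::finite \<Rightarrow> 'f::field_char_0) \<Rightarrow> (('n \<Rightarrow> 'f) \<Rightarrow> 'f)" where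
  "as_S h = (\<lambda>\<xi>. pair \<xi> h)"

definition prime_ideal_S :: "(('n::finite \<Rightarrow> 'f::field_char_0) \<Rightarrow> 'f) set \<Rightarrow> bool" where
  "prime_ideal_S \<Omega> \<longleftrightarrow> \<Omega> \<subseteq> polyfun \<and> (\<lambda>\<xi>. 0) \<in> \<Omega> \<and>
     (\<forall>f\<in>\<Omega>. \<forall>g\<in>\<Omega>. (\<lambda>\<xi>. f \<xi> + g \<xi>) \<in> \<Omega>) \<and>
     (\<forall>f\<in>\<Omega>. \<forall>g\<in>polyfun. (\<lambda>\<xi>. g \<xi> * f \<xi>) \<in> \<Omega>) \<and>
     (\<lambda>\<xi>. 1) \<notin> \<Omega> \<and>
     (\<forall>f\<in>polyfun. \<forall>g\<in>polyfun. (\<lambda>\<xi>. f \<xi> * g \<xi>) \<in> \<Omega> \<longrightarrow> f \<in> \<Omega> \<or> g \<in> \<Omega>)"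

definition zero_set :: "(('n::finite \<Rightarrow> 'f::field_char_0) \<Rightarrow> 'f) set \<Rightarrow> ('n \<Rightarrow> 'f) set" where
  "zero_set \<Omega> = {\<xi>. \<forall>f\<in>\<Omega>. f \<xi> = 0}"

definition dom_int :: "('n::finite \<Rightarrow> 'f::field_char_0) set \<Rightarrow> ('n \<Rightarrow> 'f) set \<Rightarrow> ('n \<Rightarrow> 'f) set" where
  "dom_int R B = {\<xi>. (\<forall>\<alpha>\<in>R. pair \<xi> (coroot R \<alpha>) \<in> \<int>) \<and> (\<forall>\<alpha>\<in>B. pair \<xi> (coroot R \<alpha>) \<in> \<nat>)}"

definition zariski_dense_in :: "('n::finite \<Rightarrow> 'f::field_char_0) set \<Rightarrow> ('n \<Rightarrow> 'f) set \<Rightarrow> bool" where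
  "zariski_dense_in A V \<longleftrightarrow> A \<subseteq> V \<and>
     (\<forall>f\<in>polyfun. (\<forall>\<xi>\<in>A. f \<xi> = 0) \<longrightarrow> (\<forall>\<xi>\<in>V. f \<xi> = 0))"

definition strongly_dominant :: "('n::finite \<Rightarrow> 'f::field_char_0) set \<Rightarrow> ('n \<Rightarrow> 'f) set \<Rightarrow>
    (('n \<Rightarrow> 'f) \<Rightarrow> 'f) set \<Rightarrow> bool" where
  "strongly_dominant R B \<Omega> \<longleftrightarrow> zariski_dense_in (zero_set \<Omega> \<inter> dom_int R B) (zero_set \<Omega>)"

text \<open>R_lambda for lambda = lambda_Omega: roots with H_alpha - n in Omega for some integer n.\<close>
definition R_lam :: "('n::finite \<Rightarrow> 'f::field_char_0) set \<Rightarrow> (('n \<Rightarrow> 'f) \<Rightarrow> 'f) set \<Rightarrow> ('n \<Rightarrow> 'f) set" where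
  "R_lam R \<Omega> = {\<alpha>\<in>R. \<exists>n::int. (\<lambda>\<xi>. as_S (coroot R \<alpha>) \<xi> - of_int n) \<in> \<Omega>}"

definition R_lam_pos :: "('n::finite \<Rightarrow> 'f::field_char_0) set \<Rightarrow> ('n \<Rightarrow> 'f) set \<Rightarrow>
    (('n \<Rightarrow> 'f) \<Rightarrow> 'f) set \<Rightarrow> ('n \<Rightarrow> 'f) set" where
  "R_lam_pos R B \<Omega> = pos_roots R B \<inter> R_lam R \<Omega>"

text \<open>Simple roots of R_lambda w.r.t. R_lambda^+: indecomposable positive roots.\<close>
definition B_lam :: "('n::finite \<Rightarrow> 'f::field_char_0) set \<Rightarrow> ('n \<Rightarrow> 'f) set \<Rightarrow>
    (('n \<Rightarrow> 'f) \<Rightarrow> 'f) set \<Rightarrow> ('n \<Rightarrow> 'f) set" where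
  "B_lam R B \<Omega> = {\<alpha>\<in>R_lam_pos R B \<Omega>.
     \<not> (\<exists>\<beta>\<in>R_lam_pos R B \<Omega>. \<exists>\<gamma>\<in>R_lam_pos R B \<Omega>. \<alpha> = vadd \<beta> \<gamma>)}"

definition dot_S :: "('n::finite \<Rightarrow> 'f::field_char_0) set \<Rightarrow> ('n \<Rightarrow> 'f) set \<Rightarrow>
    (('n \<Rightarrow> 'f) \<Rightarrow> ('n \<Rightarrow> 'f)) \<Rightarrow> (('n \<Rightarrow> 'f) \<Rightarrow> 'f) \<Rightarrow> (('n \<Rightarrow> 'f) \<Rightarrow> 'f)" where
  "dot_S R B w f = (\<lambda>\<xi>. f (dot R B (inv w) \<xi>))"

definition lin_S :: "(('n::finite \<Rightarrow> 'f::field_char_0) \<Rightarrow> ('n \<Rightarrow> 'f)) \<Rightarrow> (('n \<Rightarrow> 'f) \<Rightarrow> 'f) \<Rightarrow> (('n \<Rightarrow> 'f) \<Rightarrow> 'f)" where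
  "lin_S w f = (\<lambda>\<xi>. f (inv w \<xi>))"

end

theory Submission
  imports Defs "HOL-Library.Function_Algebras"
begin

text \<open>
  Let \<open>\<rho>\<close> and \<open>\<rho>'\<close> be the half sums of \<open>R\<^sup>+\<close> and \<open>R\<^sub>\<lambda>\<^sup>+\<close>, and \<open>(\<mu>, \<nu>) = \<mu>(h_\<nu>)\<close> the
  form on the dual of the Cartan subalgebra induced by the Killing form. The Killing form
  is \<open>W\<close>-invariant, so \<open>w.h_\<rho>' - w h_\<rho>'\<close> is the constant \<open>-(\<rho>, \<rho>' - w \<rho>')\<close>.
  Since \<open>w\<close> is an odd permutation of \<open>R\<^sub>\<lambda> = R\<^sub>\<lambda>\<^sup>+ \<union> -R\<^sub>\<lambda>\<^sup>+\<close>, the difference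
  \<open>\<rho>' - w \<rho>'\<close> is the sum of the roots of \<open>R\<^sub>\<lambda>\<^sup>+\<close> outside \<open>w(R\<^sub>\<lambda>\<^sup>+)\<close>, and there is at
  least one such root, \<open>-w \<gamma>\<close> for a \<open>\<gamma> \<in> B\<^sub>\<lambda>\<close> with \<open>w \<gamma> \<notin> R\<^sub>\<lambda>\<^sup>+\<close>. Finally
  every positive root \<open>\<beta> = \<Sum> k\<^sub>\<alpha> \<alpha>\<close> has \<open>(\<rho>, \<beta>) = \<Sum> k\<^sub>\<alpha> (\<alpha>, \<alpha>) / 2 > 0\<close>: indeed
  \<open>\<rho>(H_\<alpha>) = 1\<close> for simple \<open>\<alpha>\<close>, and \<open>(\<alpha>, \<alpha>) = 4 / \<kappa>(H_\<alpha>, H_\<alpha>)\<close> is a positive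
  rational because all \<open>\<beta>(H_\<alpha>)\<close> are integers.
\<close>

lemma sum_fun_apply: "sum f A i = (\<Sum>a\<in>A. f a i)"
  by (induction A rule: infinite_finite_induct) auto

lemma vadd_eq_plus: "vadd u v = u + v"
  by (rule ext) (simp add: vadd_def)

lemma vsub_eq_minus: "vsub u v = u - v"
  by (rule ext) (simp add: vsub_def)

lemma vsum_eq_sum: "vsum f A = sum f A"
  by (rule ext) (simp add: vsum_def sum_fun_apply)

lemma vscale_apply [simp]: "vscale c v i = c * v i"
  by (simp add: vscale_def)

lemma vscale_scale [simp]: "vscale a (vscale b u) = vscale (a * b) u"
  by (rule ext) simp

lemma vscale_one [simp]: "vscale 1 u = u"
  by (rule ext) simp

lemma vscale_zero [simp]: "vscale 0 u = 0"
  by (rule ext) simp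

lemma vscale_diff_left: "vscale (a - b) u = vscale a u - vscale b u"
  by (rule ext) (simp add: algebra_simps)

lemma vscale_minus_one: "vscale (- 1) u = - u"
  by (rule ext) simp

lemma vscale_uminus: "vscale c (- u) = - vscale c u"
  by (rule ext) simp

lemma vscale_uminus_left: "vscale (- c) u = - vscale c u"
  by (rule ext) simp

lemma vscale_cancel:
  assumes "vscale a u = vscale b u" and "u \<noteq> 0"
  shows "a = b"
proof -
  obtain i where "u i \<noteq> 0"
    using assms(2) by (auto simp: fun_eq_iff)
  moreover have "a * u i = b * u i"
    using fun_cong[OF assms(1), of i] by simp
  ultimately show ?thesis
    by simp
qed

lemma pair_add_left: "pair (u + v) h = pair u h + pair v h"
  by (simp add: pair_def sum.distrib distrib_right)

lemma pair_add_right: "pair h (u + v) = pair h u + pair h v"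
  by (simp add: pair_def sum.distrib distrib_left)

lemma pair_diff_left: "pair (u - v) h = pair u h - pair v h"
  by (simp add: pair_def sum_subtractf left_diff_distrib)

lemma pair_diff_right: "pair h (u - v) = pair h u - pair h v"
  by (simp add: pair_def sum_subtractf right_diff_distrib)

lemma pair_uminus_left: "pair (- u) h = - pair u h"
  by (simp add: pair_def sum_negf)

lemma pair_uminus_right: "pair h (- u) = - pair h u"
  by (simp add: pair_def sum_negf)

lemma pair_scale_left: "pair (vscale c u) h = c * pair u h"
  by (simp add: pair_def sum_distrib_left mult.assoc)

lemma pair_scale_right: "pair h (vscale c u) = c * pair h u"
  by (simp add: pair_def sum_distrib_left algebra_simps)

lemma pair_sum_left: "pair (sum f A) h = (\<Sum>a\<in>A. pair (f a) h)"
  by (simp add: pair_def sum_fun_apply sum_distrib_right) (rule sum.swap)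

lemma pair_sum_right: "pair h (sum f A) = (\<Sum>a\<in>A. pair h (f a))"
  by (simp add: pair_def sum_fun_apply sum_distrib_left) (rule sum.swap)

lemma pair_commute: "pair u h = pair h u"
  by (simp add: pair_def mult.commute)

lemmas pair_simps = pair_add_left pair_add_right pair_diff_left pair_diff_right
  pair_uminus_left pair_uminus_right pair_scale_left pair_scale_right pair_sum_left pair_sum_right

lemma pair_eq_zero_imp_zero:
  fixes u :: "'n::finite \<Rightarrow> 'f::field_char_0"
  assumes "\<And>h. pair u h = 0"
  shows "u = 0"
proof
  fix i
  have "pair u (\<lambda>j. if j = i then 1 else 0) = u i"
    by (simp add: pair_def if_distrib cong: if_cong)
  then show "u i = 0 i"
    using assms by simp
qed

lemma kappa_add_left: "kappa R (x + y) z = kappa R x z + kappa R y z"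
  by (simp add: kappa_def pair_add_right sum.distrib distrib_right)

lemma kappa_diff_left: "kappa R (x - y) z = kappa R x z - kappa R y z"
  by (simp add: kappa_def pair_diff_right sum_subtractf left_diff_distrib)

lemma kappa_scale_left: "kappa R (vscale c x) z = c * kappa R x z"
  by (simp add: kappa_def pair_scale_right sum_distrib_left mult.assoc)

lemma kappa_uminus_left: "kappa R (- x) z = - kappa R x z"
  by (simp add: kappa_def pair_simps sum_negf)

lemma kappa_sum_left: "kappa R (sum f A) z = (\<Sum>a\<in>A. kappa R (f a) z)"
  unfolding kappa_def pair_sum_right by (simp add: sum_distrib_right) (rule sum.swap)

lemma kappa_commute: "kappa R x y = kappa R y x"
  by (simp add: kappa_def mult.commute)

definition vlinear :: "(('n \<Rightarrow> 'f::field_char_0) \<Rightarrow> ('m \<Rightarrow> 'f)) \<Rightarrow> bool" where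
  "vlinear f \<longleftrightarrow> (\<forall>u v. f (u + v) = f u + f v) \<and> (\<forall>c u. f (vscale c u) = vscale c (f u))"

lemma vlinear_id: "vlinear id"
  by (simp add: vlinear_def)

lemma vlinear_comp: "vlinear f \<Longrightarrow> vlinear g \<Longrightarrow> vlinear (f \<circ> g)"
  by (simp add: vlinear_def)

lemma vlinear_zero: "vlinear f \<Longrightarrow> f 0 = 0"
  unfolding vlinear_def by (metis vscale_zero)

lemma vlinear_uminus: "vlinear f \<Longrightarrow> f (- u) = - f u"
  unfolding vlinear_def by (metis vscale_minus_one)

lemma vlinear_sum: "vlinear f \<Longrightarrow> f (sum g A) = (\<Sum>a\<in>A. f (g a))"
  by (induction A rule: infinite_finite_induct) (auto simp: vlinear_zero vlinear_def)

section \<open>Odd permutations of a symmetric set\<close>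

lemma odd_image_half:
  fixes f :: "'a::group_add \<Rightarrow> 'a"
  assumes disj: "\<And>x. x \<in> P \<Longrightarrow> - x \<notin> P"
    and inj: "inj f" and odd: "\<And>x. f (- x) = - f x"
    and perm: "f ` (P \<union> uminus ` P) = P \<union> uminus ` P"
  shows "f ` P = (P \<inter> f ` P) \<union> uminus ` (P - f ` P)"
proof (intro equalityI subsetI)
  fix y assume "y \<in> f ` P"
  then obtain x where x: "x \<in> P" "y = f x" by blast
  show "y \<in> (P \<inter> f ` P) \<union> uminus ` (P - f ` P)"
  proof (cases "y \<in> P")
    case False
    have "y \<in> P \<union> uminus ` P"
      using perm x by blast
    then have "- y \<in> P"
      using False by auto
    moreover have "- y \<notin> f ` P"
    proof
      assume "- y \<in> f ` P"
      then obtain x' where "x' \<in> P" "f (- x) = f x'"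
        using x odd by auto
      then show False
        using x disj inj by (auto simp: inj_eq)
    qed
    ultimately show ?thesis
      using rev_image_eqI[of "- y" "P - f ` P" y uminus] by simp
  qed (use \<open>y \<in> f ` P\<close> in blast)
next
  fix y assume y: "y \<in> (P \<inter> f ` P) \<union> uminus ` (P - f ` P)"
  show "y \<in> f ` P"
  proof (cases "y \<in> P \<inter> f ` P")
    case False
    then obtain z where z: "z \<in> P" "z \<notin> f ` P" "y = - z"
      using y by blast
    then have "y \<in> f ` (P \<union> uminus ` P)"
      using perm by auto
    then obtain x where x: "x \<in> P \<union> uminus ` P" "y = f x"
      by blast
    show ?thesis
    proof (cases "x \<in> P")
      case False
      then have "- x \<in> P" "f (- x) = z"
        using x z odd by auto
      then show ?thesis
        using z by blast
    qed (use x in blast)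
  qed blast
qed

lemma sum_diff_sum_odd_image:
  fixes f :: "'a::ab_group_add \<Rightarrow> 'a"
  assumes fin: "finite P" and disj: "\<And>x. x \<in> P \<Longrightarrow> - x \<notin> P"
    and inj: "inj f" and odd: "\<And>x. f (- x) = - f x"
    and perm: "f ` (P \<union> uminus ` P) = P \<union> uminus ` P"
  shows "\<Sum>P - (\<Sum>x\<in>P. f x) = \<Sum>(P - f ` P) + \<Sum>(P - f ` P)"
proof -
  let ?N = "P - f ` P"
  have "(\<Sum>x\<in>P. f x) = \<Sum>(f ` P)"
    using sum.reindex[OF inj_on_subset[OF inj subset_UNIV], of "\<lambda>x. x"] by simp
  also have "\<dots> = \<Sum>((P \<inter> f ` P) \<union> uminus ` ?N)"
    using odd_image_half[OF disj inj odd perm] by (rule arg_cong)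
  also have "\<dots> = \<Sum>(P \<inter> f ` P) + \<Sum>(uminus ` ?N)"
  proof (rule sum.union_disjoint)
    show "(P \<inter> f ` P) \<inter> uminus ` ?N = {}"
      using disj by fastforce
  qed (use fin in auto)
  also have "\<Sum>(uminus ` ?N) = - \<Sum>?N"
    by (simp add: sum.reindex sum_negf)
  also have "\<Sum>(P \<inter> f ` P) = \<Sum>P - \<Sum>?N"
    using sum.Int_Diff[OF fin, of "\<lambda>x. x" "f ` P"] by simp
  finally show ?thesis
    by (simp add: algebra_simps)
qed

section \<open>Root systems and the Killing form\<close>

locale root_sys =
  fixes R :: "('n::finite \<Rightarrow> 'f::field_char_0) set"
  assumes root_system: "root_system R"
begin

lemma finite_roots: "finite R"
  using root_system by (simp add: root_system_def)

lemma zero_not_root: "0 \<notin> R"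
  using root_system by (simp add: root_system_def zero_fun_def)

lemma roots_span: "\<exists>c. \<xi> = (\<Sum>\<alpha>\<in>R. vscale (c \<alpha>) \<alpha>)"
  using root_system by (simp add: root_system_def vsum_eq_sum)

lemma roots_reduced: "\<alpha> \<in> R \<Longrightarrow> vscale c \<alpha> \<in> R \<Longrightarrow> c = 1 \<or> c = -1"
  using root_system by (simp add: root_system_def)

text \<open>This equals \<^const>\<open>coroot\<close> (see \<open>coroot_eq_ax_coroot\<close>), but unlike it can be used
  before the Killing form is known to be nondegenerate.\<close>

definition ax_coroot :: "('n \<Rightarrow> 'f) \<Rightarrow> ('n \<Rightarrow> 'f)" where
  "ax_coroot \<alpha> = (SOME H. pair \<alpha> H = 2 \<and>
     (\<forall>\<beta>\<in>R. pair \<beta> H \<in> \<int> \<and> \<beta> - vscale (pair \<beta> H) \<alpha> \<in> R))"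

definition reflect :: "('n \<Rightarrow> 'f) \<Rightarrow> ('n \<Rightarrow> 'f) \<Rightarrow> ('n \<Rightarrow> 'f)" where
  "reflect \<alpha> \<xi> = \<xi> - vscale (pair \<xi> (ax_coroot \<alpha>)) \<alpha>"

definition coreflect :: "('n \<Rightarrow> 'f) \<Rightarrow> ('n \<Rightarrow> 'f) \<Rightarrow> ('n \<Rightarrow> 'f)" where
  "coreflect \<alpha> x = x - vscale (pair \<alpha> x) (ax_coroot \<alpha>)"

lemma ax_coroot_spec:
  assumes "\<alpha> \<in> R"
  shows pair_ax_coroot_self: "pair \<alpha> (ax_coroot \<alpha>) = 2"
    and pair_ax_coroot_Ints: "\<And>\<beta>. \<beta> \<in> R \<Longrightarrow> pair \<beta> (ax_coroot \<alpha>) \<in> \<int>"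
    and reflect_root: "\<And>\<beta>. \<beta> \<in> R \<Longrightarrow> reflect \<alpha> \<beta> \<in> R"
proof -
  have "\<exists>H. pair \<alpha> H = 2 \<and> (\<forall>\<beta>\<in>R. pair \<beta> H \<in> \<int> \<and> \<beta> - vscale (pair \<beta> H) \<alpha> \<in> R)"
    using root_system assms by (simp add: root_system_def vsub_eq_minus)
  from someI_ex[OF this]
  show "pair \<alpha> (ax_coroot \<alpha>) = 2" "\<And>\<beta>. \<beta> \<in> R \<Longrightarrow> pair \<beta> (ax_coroot \<alpha>) \<in> \<int>"
    "\<And>\<beta>. \<beta> \<in> R \<Longrightarrow> reflect \<alpha> \<beta> \<in> R"
    unfolding ax_coroot_def reflect_def by blast+
qed

lemma reflect_reflect: "\<alpha> \<in> R \<Longrightarrow> reflect \<alpha> (reflect \<alpha> \<xi>) = \<xi>"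
  by (rule ext) (simp add: reflect_def pair_simps pair_ax_coroot_self algebra_simps)

lemma coreflect_coreflect: "\<alpha> \<in> R \<Longrightarrow> coreflect \<alpha> (coreflect \<alpha> x) = x"
  by (rule ext) (simp add: coreflect_def pair_simps pair_ax_coroot_self algebra_simps)

lemma reflect_self: "\<alpha> \<in> R \<Longrightarrow> reflect \<alpha> \<alpha> = - \<alpha>"
  by (rule ext) (simp add: reflect_def pair_ax_coroot_self)

lemma coreflect_ax_coroot: "\<alpha> \<in> R \<Longrightarrow> coreflect \<alpha> (ax_coroot \<alpha>) = - ax_coroot \<alpha>"
  by (rule ext) (simp add: coreflect_def pair_ax_coroot_self)

lemma pair_reflect: "pair (reflect \<alpha> \<mu>) x = pair \<mu> (coreflect \<alpha> x)"
  by (simp add: reflect_def coreflect_def pair_simps mult.commute)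

lemma bij_betw_reflect_roots: "\<alpha> \<in> R \<Longrightarrow> bij_betw (reflect \<alpha>) R R"
  by (rule bij_betw_byWitness[where f'="reflect \<alpha>"]) (auto simp: reflect_reflect reflect_root)

lemma uminus_root: "\<alpha> \<in> R \<Longrightarrow> - \<alpha> \<in> R"
  using reflect_root[of \<alpha> \<alpha>] reflect_self by simp

lemma kappa_coreflect:
  assumes "\<alpha> \<in> R"
  shows "kappa R (coreflect \<alpha> x) (coreflect \<alpha> y) = kappa R x y"
  unfolding kappa_def pair_reflect[symmetric]
  by (rule sum.reindex_bij_betw[OF bij_betw_reflect_roots[OF assms],
        where g="\<lambda>\<beta>. pair \<beta> x * pair \<beta> y"])

definition coroot_norm :: "('n \<Rightarrow> 'f) \<Rightarrow> 'f" where
  "coroot_norm \<alpha> = kappa R (ax_coroot \<alpha>) (ax_coroot \<alpha>)"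

text \<open>\<open>H\<^sub>\<alpha>\<close> is \<open>\<kappa>\<close>-orthogonal to the kernel of \<open>\<alpha>\<close>: the \<open>\<kappa>\<close>-isometry \<open>s\<^sub>\<alpha>\<close> fixes that
  kernel and negates \<open>H\<^sub>\<alpha>\<close>.\<close>

lemma kappa_ax_coroot:
  assumes "\<alpha> \<in> R"
  shows "kappa R (ax_coroot \<alpha>) y = coroot_norm \<alpha> / 2 * pair \<alpha> y"
proof -
  define z where "z = y - vscale (pair \<alpha> y / 2) (ax_coroot \<alpha>)"
  have "coreflect \<alpha> z = z"
    by (simp add: coreflect_def z_def pair_simps pair_ax_coroot_self[OF assms])
  then have "kappa R (ax_coroot \<alpha>) z = - kappa R (ax_coroot \<alpha>) z"
    using kappa_coreflect[OF assms, of "ax_coroot \<alpha>" z]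
    by (simp add: coreflect_ax_coroot[OF assms] kappa_uminus_left)
  then have "kappa R z (ax_coroot \<alpha>) = 0"
    by (simp add: kappa_commute)
  moreover have "y = z + vscale (pair \<alpha> y / 2) (ax_coroot \<alpha>)"
    by (simp add: z_def)
  ultimately have "kappa R y (ax_coroot \<alpha>) = pair \<alpha> y / 2 * coroot_norm \<alpha>"
    by (metis kappa_add_left kappa_scale_left coroot_norm_def add_0)
  then show ?thesis
    by (simp add: kappa_commute)
qed

lemma coroot_norm_int:
  assumes "\<alpha> \<in> R"
  shows "\<exists>m::int. m > 0 \<and> coroot_norm \<alpha> = of_int m"
proof -
  have "\<forall>\<beta>\<in>R. \<exists>m::int. pair \<beta> (ax_coroot \<alpha>) = of_int m"
    using pair_ax_coroot_Ints[OF assms] by (auto elim: Ints_cases)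
  then obtain n where n: "\<And>\<beta>. \<beta> \<in> R \<Longrightarrow> pair \<beta> (ax_coroot \<alpha>) = of_int (n \<beta>)"
    by metis
  have "coroot_norm \<alpha> = of_int (\<Sum>\<beta>\<in>R. n \<beta> ^ 2)"
    by (simp add: coroot_norm_def kappa_def n power2_eq_square)
  moreover have "n \<alpha> = 2"
    using n[OF assms] pair_ax_coroot_self[OF assms] by simp
  then have "(\<Sum>\<beta>\<in>R. n \<beta> ^ 2) \<ge> 4"
    using member_le_sum[of \<alpha> R "\<lambda>\<beta>. n \<beta> ^ 2"] assms finite_roots by simp
  ultimately show ?thesis
    by (intro exI[of _ "\<Sum>\<beta>\<in>R. n \<beta> ^ 2"]) simp
qed

lemma coroot_norm_nonzero: "\<alpha> \<in> R \<Longrightarrow> coroot_norm \<alpha> \<noteq> 0"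
  using coroot_norm_int by fastforce

lemma pair_roots_eq_zero_imp_zero:
  assumes "\<And>\<alpha>. \<alpha> \<in> R \<Longrightarrow> pair \<alpha> x = 0"
  shows "x = 0"
proof (rule pair_eq_zero_imp_zero)
  fix h
  obtain c where "h = (\<Sum>\<alpha>\<in>R. vscale (c \<alpha>) \<alpha>)"
    using roots_span by blast
  then show "pair x h = 0"
    using assms by (simp add: pair_commute[of x] pair_sum_left pair_scale_left)
qed

lemma kappa_nondegenerate:
  assumes "\<And>y. kappa R x y = 0"
  shows "x = 0"
proof (rule pair_roots_eq_zero_imp_zero)
  fix \<alpha> assume "\<alpha> \<in> R"
  then show "pair \<alpha> x = 0"
    using assms[of "ax_coroot \<alpha>"] kappa_ax_coroot[of \<alpha> x] coroot_norm_nonzero[of \<alpha>]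
    by (simp add: kappa_commute)
qed

lemma kappa_represents: "\<exists>!x. \<forall>h. kappa R x h = pair \<mu> h"
proof -
  obtain c where c: "\<mu> = (\<Sum>\<alpha>\<in>R. vscale (c \<alpha>) \<alpha>)"
    using roots_span by blast
  define x where "x = (\<Sum>\<alpha>\<in>R. vscale (c \<alpha> * 2 / coroot_norm \<alpha>) (ax_coroot \<alpha>))"
  have x: "kappa R x h = pair \<mu> h" for h
  proof -
    have "kappa R x h = (\<Sum>\<alpha>\<in>R. c \<alpha> * 2 / coroot_norm \<alpha> * (coroot_norm \<alpha> / 2 * pair \<alpha> h))"
      unfolding x_def kappa_sum_left kappa_scale_left by (simp add: kappa_ax_coroot)
    also have "\<dots> = pair \<mu> h"
      by (simp add: c pair_sum_left pair_scale_left coroot_norm_nonzero)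
    finally show ?thesis .
  qed
  have "y = x" if "\<forall>h. kappa R y h = pair \<mu> h" for y
    using kappa_nondegenerate[of "y - x"] that x by (simp add: kappa_diff_left)
  then show ?thesis
    using x by blast
qed

lemma kappa_hof: "kappa R (hof R \<mu>) h = pair \<mu> h"
  using theI'[OF kappa_represents[of \<mu>]] unfolding hof_def by blast

lemma hof_eqI: "(\<And>h. kappa R x h = pair \<mu> h) \<Longrightarrow> hof R \<mu> = x"
  using kappa_represents[of \<mu>] kappa_hof[of \<mu>] by blast

lemma hof_diff: "hof R (u - v) = hof R u - hof R v"
  by (rule hof_eqI) (simp add: kappa_diff_left kappa_hof pair_diff_left)

lemma hof_uminus: "hof R (- u) = - hof R u"
  by (rule hof_eqI) (simp add: kappa_uminus_left kappa_hof pair_uminus_left)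

lemma hof_scale: "hof R (vscale c u) = vscale c (hof R u)"
  by (rule hof_eqI) (simp add: kappa_scale_left kappa_hof pair_scale_left)

lemma hof_sum: "hof R (sum f A) = (\<Sum>a\<in>A. hof R (f a))"
  by (rule hof_eqI) (simp add: kappa_sum_left kappa_hof pair_sum_left)

lemma hof_root: "\<alpha> \<in> R \<Longrightarrow> hof R \<alpha> = vscale (2 / coroot_norm \<alpha>) (ax_coroot \<alpha>)"
  by (rule hof_eqI) (simp add: kappa_scale_left kappa_ax_coroot coroot_norm_nonzero)

lemma coroot_eq_ax_coroot:
  assumes "\<alpha> \<in> R"
  shows "coroot R \<alpha> = ax_coroot \<alpha>"
proof -
  have "kappa R (hof R \<alpha>) (hof R \<alpha>) = pair \<alpha> (hof R \<alpha>)"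
    by (rule kappa_hof)
  also have "\<dots> = 4 / coroot_norm \<alpha>"
    by (simp add: hof_root[OF assms] pair_scale_right pair_ax_coroot_self[OF assms])
  finally have "kappa R (hof R \<alpha>) (hof R \<alpha>) = 4 / coroot_norm \<alpha>" .
  then show ?thesis
    by (simp add: coroot_def hof_root[OF assms] coroot_norm_nonzero[OF assms])
qed

lemma coroot_uminus: "coroot R (- \<alpha>) = - coroot R \<alpha>"
  by (simp add: coroot_def hof_uminus kappa_uminus_left kappa_commute[of R _ "- _"] vscale_uminus)

lemma refl_eq_reflect: "\<alpha> \<in> R \<Longrightarrow> refl R \<alpha> = reflect \<alpha>"
  by (rule ext) (simp add: refl_def reflect_def coroot_eq_ax_coroot vsub_eq_minus)

lemma hof_reflect:
  assumes "\<alpha> \<in> R"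
  shows "hof R (reflect \<alpha> \<nu>) = coreflect \<alpha> (hof R \<nu>)"
proof (rule hof_eqI)
  fix h
  have "kappa R (coreflect \<alpha> (hof R \<nu>)) h
      = kappa R (coreflect \<alpha> (hof R \<nu>)) (coreflect \<alpha> (coreflect \<alpha> h))"
    by (simp add: coreflect_coreflect[OF assms])
  also have "\<dots> = pair (reflect \<alpha> \<nu>) h"
    by (simp add: kappa_coreflect[OF assms] kappa_hof pair_reflect)
  finally show "kappa R (coreflect \<alpha> (hof R \<nu>)) h = pair (reflect \<alpha> \<nu>) h" .
qed

section \<open>The Weyl group\<close>

lemma vlinear_reflect: "vlinear (reflect \<alpha>)"
  unfolding vlinear_def reflect_def
  by (auto simp: fun_eq_iff pair_add_left pair_scale_left algebra_simps)

lemma weyl_vlinear: "w \<in> weyl R \<Longrightarrow> vlinear w"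
proof (induction rule: weyl.induct)
  case (weyl_step w \<alpha>)
  then show ?case
    unfolding refl_eq_reflect[OF weyl_step.hyps(2)] by (intro vlinear_comp vlinear_reflect)
qed (rule vlinear_id)

lemma weyl_bij: "w \<in> weyl R \<Longrightarrow> bij w"
proof (induction rule: weyl.induct)
  case (weyl_step w \<alpha>)
  have "bij (reflect \<alpha>)"
    by (rule o_bij[of "reflect \<alpha>"]) (auto simp: fun_eq_iff reflect_reflect weyl_step.hyps)
  then show ?case
    unfolding refl_eq_reflect[OF weyl_step.hyps(2)] by (rule bij_comp[OF weyl_step.IH])
qed (rule bij_id)

lemma weyl_pair_hof_invariant:
  "w \<in> weyl R \<Longrightarrow> pair (w \<mu>) (hof R (w \<nu>)) = pair \<mu> (hof R \<nu>)"
  by (induction arbitrary: \<mu> \<nu> rule: weyl.induct)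
    (simp_all add: refl_eq_reflect hof_reflect pair_reflect[symmetric] reflect_reflect)

lemma pair_inv_weyl_hof:
  assumes "w \<in> weyl R"
  shows "pair (inv w \<mu>) (hof R \<nu>) = pair \<mu> (hof R (w \<nu>))"
  using weyl_pair_hof_invariant[OF assms, of "inv w \<mu>" \<nu>] weyl_bij[OF assms]
  by (simp add: bij_is_surj surj_f_inv_f)

end

section \<open>Positive roots\<close>

locale based_root_sys = root_sys R for R :: "('n::finite \<Rightarrow> 'f::field_char_0) set" +
  fixes B :: "('n \<Rightarrow> 'f) set"
  assumes is_base: "is_base R B"
begin

lemma simple_roots_subset: "B \<subseteq> R"
  using is_base by (simp add: is_base_def)

lemma finite_simple_roots: "finite B"
  using simple_roots_subset finite_roots finite_subset by blast

definition simple_comb :: "(('n \<Rightarrow> 'f) \<Rightarrow> int) \<Rightarrow> ('n \<Rightarrow> 'f)" where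
  "simple_comb k = (\<Sum>\<alpha>\<in>B. vscale (of_int (k \<alpha>)) \<alpha>)"

lemma root_simple_comb:
  "\<beta> \<in> R \<Longrightarrow> \<exists>k. \<beta> = simple_comb k \<and> ((\<forall>\<alpha>\<in>B. k \<alpha> \<ge> 0) \<or> (\<forall>\<alpha>\<in>B. k \<alpha> \<le> 0))"
  using is_base unfolding is_base_def vsum_eq_sum simple_comb_def by blast

lemma pos_roots_simple_comb:
  "pos_roots R B = {\<beta>\<in>R. \<exists>k. \<beta> = simple_comb k \<and> (\<forall>\<alpha>\<in>B. k \<alpha> \<ge> 0)}"
  unfolding pos_roots_def vsum_eq_sum simple_comb_def by simp

lemma finite_pos_roots: "finite (pos_roots R B)"
  using finite_roots by (simp add: pos_roots_simple_comb)

lemma simple_comb_diff: "simple_comb (\<lambda>\<alpha>. k \<alpha> - j \<alpha>) = simple_comb k - simple_comb j"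
  unfolding simple_comb_def by (simp add: sum_subtractf[symmetric] vscale_diff_left)

lemma simple_comb_uminus: "simple_comb (\<lambda>\<alpha>. - k \<alpha>) = - simple_comb k"
  unfolding simple_comb_def by (simp add: sum_negf[symmetric] vscale_uminus_left)

lemma simple_comb_eq_zero: "(\<And>\<alpha>. \<alpha> \<in> B \<Longrightarrow> k \<alpha> = 0) \<Longrightarrow> simple_comb k = 0"
  unfolding simple_comb_def by simp

lemma simple_comb_single:
  assumes "\<gamma> \<in> B" and "\<And>\<delta>. \<delta> \<in> B \<Longrightarrow> \<delta> \<noteq> \<gamma> \<Longrightarrow> k \<delta> = 0"
  shows "simple_comb k = vscale (of_int (k \<gamma>)) \<gamma>"
  unfolding simple_comb_def using finite_simple_roots assms
  by (simp add: sum.remove[of B \<gamma>] sum.neutral)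

lemma simple_comb_eqD:
  assumes "simple_comb k = simple_comb j" and "\<alpha> \<in> B"
  shows "k \<alpha> = j \<alpha>"
proof -
  have "vsum (\<lambda>\<alpha>. vscale (of_int (k \<alpha> - j \<alpha>)) \<alpha>) B = (\<lambda>i. 0)"
    using assms(1) simple_comb_diff[of k j]
    by (simp add: vsum_eq_sum simple_comb_def zero_fun_def)
  then show ?thesis
    using is_base assms(2) unfolding is_base_def by fastforce
qed

lemma pos_root_coeff_pos:
  assumes "\<beta> \<in> R" and "\<beta> = simple_comb k" and "\<forall>\<alpha>\<in>B. k \<alpha> \<ge> 0"
  shows "\<exists>\<alpha>\<in>B. k \<alpha> > 0"
  using assms simple_comb_eq_zero[of k] zero_not_root by force

lemma simple_root_pos:
  assumes "\<gamma> \<in> B"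
  shows "\<gamma> \<in> pos_roots R B"
proof -
  have "\<gamma> = simple_comb (\<lambda>\<alpha>. if \<alpha> = \<gamma> then 1 else 0)"
    by (subst simple_comb_single[OF assms]) auto
  then show ?thesis
    using assms simple_roots_subset unfolding pos_roots_simple_comb by force
qed

lemma root_pos_or_neg:
  assumes "\<beta> \<in> R"
  shows "\<beta> \<in> pos_roots R B \<or> - \<beta> \<in> pos_roots R B"
proof -
  obtain k where k: "\<beta> = simple_comb k" "(\<forall>\<alpha>\<in>B. k \<alpha> \<ge> 0) \<or> (\<forall>\<alpha>\<in>B. k \<alpha> \<le> 0)"
    using root_simple_comb[OF assms] by blast
  then have "(\<forall>\<alpha>\<in>B. k \<alpha> \<ge> 0) \<or> - \<beta> = simple_comb (\<lambda>\<alpha>. - k \<alpha>) \<and> (\<forall>\<alpha>\<in>B. - k \<alpha> \<ge> 0)"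
    by (auto simp: simple_comb_uminus)
  then show ?thesis
    using k assms uminus_root[OF assms] unfolding pos_roots_simple_comb by blast
qed

lemma pos_root_uminus_not_pos:
  assumes "\<beta> \<in> pos_roots R B"
  shows "- \<beta> \<notin> pos_roots R B"
proof
  assume "- \<beta> \<in> pos_roots R B"
  then obtain j where j: "- \<beta> = simple_comb j" "\<forall>\<alpha>\<in>B. j \<alpha> \<ge> 0"
    by (auto simp: pos_roots_simple_comb)
  obtain k where k: "\<beta> = simple_comb k" "\<forall>\<alpha>\<in>B. k \<alpha> \<ge> 0" and "\<beta> \<in> R"
    using assms by (auto simp: pos_roots_simple_comb)
  have "simple_comb k = simple_comb (\<lambda>\<alpha>. - j \<alpha>)"
    using j(1) k(1) simple_comb_uminus[of j] by (metis minus_minus)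
  then have "\<forall>\<alpha>\<in>B. k \<alpha> = - j \<alpha>"
    using simple_comb_eqD by blast
  then show False
    using pos_root_coeff_pos[OF \<open>\<beta> \<in> R\<close> k] j(2) by force
qed

lemma pos_root_coeff_pos_off_simple:
  assumes "\<gamma> \<in> B" and "\<beta> \<in> R" "\<beta> \<noteq> \<gamma>" and "\<beta> = simple_comb k" "\<forall>\<alpha>\<in>B. k \<alpha> \<ge> 0"
  shows "\<exists>\<delta>\<in>B. \<delta> \<noteq> \<gamma> \<and> k \<delta> > 0"
proof (rule ccontr)
  assume "\<not> ?thesis"
  then have eq: "\<beta> = vscale (of_int (k \<gamma>)) \<gamma>"
    using simple_comb_single[OF assms(1), of k] assms(4,5) by force
  then have "k \<gamma> = 1 \<or> k \<gamma> = -1"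
    using roots_reduced[of \<gamma> "of_int (k \<gamma>)"] assms(1,2) simple_roots_subset
    by (metis in_mono of_int_eq_1_iff of_int_eq_iff of_int_minus)
  then show False
    using eq assms(1,3,5) by force
qed

lemma reflect_simple_pos_root:
  assumes \<gamma>: "\<gamma> \<in> B" and \<beta>: "\<beta> \<in> pos_roots R B" "\<beta> \<noteq> \<gamma>"
  shows "reflect \<gamma> \<beta> \<in> pos_roots R B - {\<gamma>}"
proof -
  have "\<gamma> \<in> R"
    using \<gamma> simple_roots_subset by blast
  obtain k where k: "\<beta> = simple_comb k" "\<forall>\<alpha>\<in>B. k \<alpha> \<ge> 0" and "\<beta> \<in> R"
    using \<beta>(1) by (auto simp: pos_roots_simple_comb)
  obtain m where m: "pair \<beta> (ax_coroot \<gamma>) = of_int m"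
    using pair_ax_coroot_Ints[OF \<open>\<gamma> \<in> R\<close> \<open>\<beta> \<in> R\<close>] by (auto elim: Ints_cases)
  define k' where "k' = (\<lambda>\<alpha>. k \<alpha> - (if \<alpha> = \<gamma> then m else 0))"
  have k': "reflect \<gamma> \<beta> = simple_comb k'"
    unfolding k'_def simple_comb_diff reflect_def m k(1)[symmetric]
    by (subst simple_comb_single[OF \<gamma>]) auto
  text \<open>\<open>s\<^sub>\<gamma>\<close> changes only the \<open>\<gamma>\<close>-coordinate, so a positive coordinate of \<open>\<beta>\<close> at
    some \<open>\<delta> \<noteq> \<gamma>\<close> survives and forces the root \<open>s\<^sub>\<gamma> \<beta>\<close> to be positive.\<close>
  obtain \<delta> where \<delta>: "\<delta> \<in> B" "\<delta> \<noteq> \<gamma>" "k \<delta> > 0"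
    using pos_root_coeff_pos_off_simple[OF \<gamma> \<open>\<beta> \<in> R\<close> \<beta>(2) k] by blast
  obtain j where j: "reflect \<gamma> \<beta> = simple_comb j" "(\<forall>\<alpha>\<in>B. j \<alpha> \<ge> 0) \<or> (\<forall>\<alpha>\<in>B. j \<alpha> \<le> 0)"
    using root_simple_comb[OF reflect_root[OF \<open>\<gamma> \<in> R\<close> \<open>\<beta> \<in> R\<close>]] by blast
  have "j \<delta> = k' \<delta>"
    using simple_comb_eqD[of j k' \<delta>] j(1) k' \<delta>(1) by simp
  then have "\<forall>\<alpha>\<in>B. j \<alpha> \<ge> 0"
    using j(2) \<delta> by (force simp: k'_def)
  then have "reflect \<gamma> \<beta> \<in> pos_roots R B"
    using j(1) reflect_root[OF \<open>\<gamma> \<in> R\<close> \<open>\<beta> \<in> R\<close>] by (auto simp: pos_roots_simple_comb)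
  moreover have "reflect \<gamma> \<beta> \<noteq> \<gamma>"
    using reflect_reflect[OF \<open>\<gamma> \<in> R\<close>, of \<beta>] reflect_self[OF \<open>\<gamma> \<in> R\<close>] \<beta>(1)
      pos_root_uminus_not_pos[OF simple_root_pos[OF \<gamma>]] by auto
  ultimately show ?thesis
    by blast
qed

definition rho :: "'n \<Rightarrow> 'f" where
  "rho = halfsum (pos_roots R B)"

lemma pair_rho_ax_coroot_simple:
  assumes \<gamma>: "\<gamma> \<in> B"
  shows "pair rho (ax_coroot \<gamma>) = 1"
proof -
  let ?Rp = "pos_roots R B"
  have "\<gamma> \<in> R" "\<gamma> \<in> ?Rp"
    using \<gamma> simple_roots_subset simple_root_pos by auto
  have "bij_betw (reflect \<gamma>) (?Rp - {\<gamma>}) (?Rp - {\<gamma>})"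
  proof (rule bij_betw_byWitness[where f'="reflect \<gamma>"])
    show "\<forall>\<beta>\<in>?Rp - {\<gamma>}. reflect \<gamma> (reflect \<gamma> \<beta>) = \<beta>"
      using reflect_reflect[OF \<open>\<gamma> \<in> R\<close>] by blast
    then show "\<forall>\<beta>\<in>?Rp - {\<gamma>}. reflect \<gamma> (reflect \<gamma> \<beta>) = \<beta>" .
    show "reflect \<gamma> ` (?Rp - {\<gamma>}) \<subseteq> ?Rp - {\<gamma>}"
      using reflect_simple_pos_root[OF \<gamma>] by (intro image_subsetI) blast
    then show "reflect \<gamma> ` (?Rp - {\<gamma>}) \<subseteq> ?Rp - {\<gamma>}" .
  qed
  then have perm: "(\<Sum>\<alpha>\<in>?Rp - {\<gamma>}. reflect \<gamma> \<alpha>) = \<Sum>(?Rp - {\<gamma>})"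
    by (rule sum.reindex_bij_betw)
  have "reflect \<gamma> (\<Sum>?Rp) = (\<Sum>\<alpha>\<in>?Rp. reflect \<gamma> \<alpha>)"
    by (rule vlinear_sum[OF vlinear_reflect])
  also have "\<dots> = reflect \<gamma> \<gamma> + (\<Sum>\<alpha>\<in>?Rp - {\<gamma>}. reflect \<gamma> \<alpha>)"
    using finite_pos_roots \<open>\<gamma> \<in> ?Rp\<close> by (rule sum.remove)
  also have "\<dots> = - \<gamma> + (\<Sum>?Rp - \<gamma>)"
    using finite_pos_roots \<open>\<gamma> \<in> ?Rp\<close> by (simp add: perm sum_diff1 reflect_self[OF \<open>\<gamma> \<in> R\<close>])
  also have "\<dots> = \<Sum>?Rp - vscale 2 \<gamma>"
    by (simp add: fun_eq_iff)
  finally have "reflect \<gamma> (\<Sum>?Rp) = \<Sum>?Rp - vscale 2 \<gamma>" .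
  then have "vscale (pair (\<Sum>?Rp) (ax_coroot \<gamma>)) \<gamma> = vscale 2 \<gamma>"
    by (simp add: reflect_def)
  then have "pair (\<Sum>?Rp) (ax_coroot \<gamma>) = 2"
    by (rule vscale_cancel) (use \<open>\<gamma> \<in> R\<close> zero_not_root in auto)
  then show ?thesis
    by (simp add: rho_def halfsum_def vsum_eq_sum pair_scale_left)
qed

lemma pair_rho_hof_simple:
  assumes "\<gamma> \<in> B"
  shows "\<exists>q::rat. q > 0 \<and> pair rho (hof R \<gamma>) = of_rat q"
proof -
  have "\<gamma> \<in> R"
    using assms simple_roots_subset by blast
  obtain m where "m > 0" "coroot_norm \<gamma> = of_int m"
    using coroot_norm_int[OF \<open>\<gamma> \<in> R\<close>] by blast
  then have "pair rho (hof R \<gamma>) = of_rat (2 / of_int m)"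
    by (simp add: hof_root[OF \<open>\<gamma> \<in> R\<close>] pair_scale_right pair_rho_ax_coroot_simple[OF assms]
        of_rat_divide)
  then show ?thesis
    using \<open>m > 0\<close> by (intro exI[of _ "2 / of_int m"]) simp
qed

lemma pair_rho_hof_pos_root:
  assumes "\<beta> \<in> pos_roots R B"
  shows "\<exists>q::rat. q > 0 \<and> pair rho (hof R \<beta>) = of_rat q"
proof -
  obtain k where k: "\<beta> = simple_comb k" "\<forall>\<alpha>\<in>B. k \<alpha> \<ge> 0" and "\<beta> \<in> R"
    using assms by (auto simp: pos_roots_simple_comb)
  obtain q where q: "\<And>\<alpha>. \<alpha> \<in> B \<Longrightarrow> q \<alpha> > 0 \<and> pair rho (hof R \<alpha>) = of_rat (q \<alpha>)"
    using pair_rho_hof_simple by metis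
  have "pair rho (hof R \<beta>) = (\<Sum>\<alpha>\<in>B. of_int (k \<alpha>) * of_rat (q \<alpha>))"
    unfolding k(1) simple_comb_def hof_sum hof_scale pair_sum_right pair_scale_right
    by (simp add: q)
  also have "\<dots> = of_rat (\<Sum>\<alpha>\<in>B. of_int (k \<alpha>) * q \<alpha>)"
    by (simp add: of_rat_sum of_rat_mult)
  finally have "pair rho (hof R \<beta>) = of_rat (\<Sum>\<alpha>\<in>B. of_int (k \<alpha>) * q \<alpha>)" .
  moreover obtain \<alpha> where "\<alpha> \<in> B" "k \<alpha> > 0"
    using pos_root_coeff_pos[OF \<open>\<beta> \<in> R\<close> k] by blast
  then have "(\<Sum>\<alpha>\<in>B. of_int (k \<alpha>) * q \<alpha>) > 0"
  proof (intro sum_pos2[OF finite_simple_roots])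
    show "0 \<le> of_int (k \<alpha>') * q \<alpha>'" if "\<alpha>' \<in> B" for \<alpha>'
      using k(2) q[OF that] that by simp
  qed (use q in auto)
  ultimately show ?thesis
    by blast
qed

lemma pair_rho_hof_sum_pos_roots:
  assumes "finite N" and "N \<noteq> {}" and "N \<subseteq> pos_roots R B"
  shows "\<exists>c::rat. c > 0 \<and> pair rho (hof R (\<Sum>N)) = of_rat c"
proof -
  obtain q where q: "\<And>\<beta>. \<beta> \<in> N \<Longrightarrow> q \<beta> > 0 \<and> pair rho (hof R \<beta>) = of_rat (q \<beta>)"
    using pair_rho_hof_pos_root assms(3) by (metis subsetD)
  have "pair rho (hof R (\<Sum>N)) = of_rat (\<Sum>\<beta>\<in>N. q \<beta>)"
    by (simp add: hof_sum pair_sum_right q of_rat_sum)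
  moreover have "(\<Sum>\<beta>\<in>N. q \<beta>) > 0"
    using assms(1,2) q by (intro sum_pos) auto
  ultimately show ?thesis
    by blast
qed

lemma dot_S_as_S_hof:
  assumes "w \<in> weyl R"
  shows "dot_S R B w (as_S (hof R \<nu>)) = (\<lambda>\<xi>. lin_S w (as_S (hof R \<nu>)) \<xi> - pair rho (hof R (\<nu> - w \<nu>)))"
proof
  fix \<xi>
  have "dot_S R B w (as_S (hof R \<nu>)) \<xi> = pair (inv w (\<xi> + rho) - rho) (hof R \<nu>)"
    by (simp add: dot_S_def dot_def as_S_def vsub_eq_minus vadd_eq_plus rho_def)
  also have "\<dots> = pair \<xi> (hof R (w \<nu>)) - pair rho (hof R (\<nu> - w \<nu>))"
    by (simp add: pair_inv_weyl_hof[OF assms] pair_simps hof_diff)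
  also have "pair \<xi> (hof R (w \<nu>)) = lin_S w (as_S (hof R \<nu>)) \<xi>"
    by (simp add: lin_S_def as_S_def pair_inv_weyl_hof[OF assms])
  finally show "dot_S R B w (as_S (hof R \<nu>)) \<xi>
      = lin_S w (as_S (hof R \<nu>)) \<xi> - pair rho (hof R (\<nu> - w \<nu>))" .
qed

end

section \<open>The roots integral at \<open>\<lambda>\<^sub>\<Omega>\<close>\<close>

lemma (in root_sys) R_lam_uminus:
  assumes "prime_ideal_S \<Omega>" and "\<alpha> \<in> R_lam R \<Omega>"
  shows "- \<alpha> \<in> R_lam R \<Omega>"
proof -
  obtain n :: int where n: "(\<lambda>\<xi>. as_S (coroot R \<alpha>) \<xi> - of_int n) \<in> \<Omega>" and "\<alpha> \<in> R"
    using assms(2) by (auto simp: R_lam_def)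
  have "\<forall>f\<in>\<Omega>. \<forall>g\<in>polyfun. (\<lambda>\<xi>. g \<xi> * f \<xi>) \<in> \<Omega>"
    using assms(1) by (simp add: prime_ideal_S_def)
  from this[rule_format, OF n polyfun.pf_const[of "- 1"]]
  have "(\<lambda>\<xi>. - 1 * (as_S (coroot R \<alpha>) \<xi> - of_int n)) \<in> \<Omega>" .
  also have "(\<lambda>\<xi>. - 1 * (as_S (coroot R \<alpha>) \<xi> - of_int n))
      = (\<lambda>\<xi>. as_S (coroot R (- \<alpha>)) \<xi> - of_int (- n))"
    by (simp add: fun_eq_iff as_S_def coroot_uminus pair_uminus_right)
  finally show ?thesis
    using uminus_root[OF \<open>\<alpha> \<in> R\<close>] unfolding R_lam_def by blast
qed

lemma (in root_sys) R_lam_pos_diff_weyl_nonempty: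
  assumes "w \<in> weyl R" and "\<not> w ` B_lam R B \<Omega> \<subseteq> R_lam_pos R B \<Omega>"
  shows "R_lam_pos R B \<Omega> - w ` R_lam_pos R B \<Omega> \<noteq> {}"
proof
  let ?P = "R_lam_pos R B \<Omega>"
  assume "?P - w ` ?P = {}"
  moreover have "finite ?P"
    using finite_roots by (rule finite_subset[rotated]) (auto simp: R_lam_pos_def R_lam_def)
  moreover have "card (w ` ?P) = card ?P"
    using inj_on_subset[OF bij_is_inj[OF weyl_bij[OF assms(1)]] subset_UNIV] by (rule card_image)
  ultimately have "w ` ?P = ?P"
    by (metis Diff_eq_empty_iff card_subset_eq finite_imageI)
  moreover have "B_lam R B \<Omega> \<subseteq> ?P"
    by (auto simp: B_lam_def)
  ultimately show False
    using assms(2) by blast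
qed

lemma (in based_root_sys) R_lam_eq_pos_union_uminus:
  assumes "prime_ideal_S \<Omega>"
  shows "R_lam R \<Omega> = R_lam_pos R B \<Omega> \<union> uminus ` R_lam_pos R B \<Omega>"
proof (intro equalityI subsetI)
  fix \<beta> assume "\<beta> \<in> R_lam R \<Omega>"
  then show "\<beta> \<in> R_lam_pos R B \<Omega> \<union> uminus ` R_lam_pos R B \<Omega>"
    using root_pos_or_neg[of \<beta>] R_lam_uminus[OF assms, of \<beta>]
    by (force simp: R_lam_pos_def R_lam_def)
qed (use R_lam_uminus[OF assms] in \<open>auto simp: R_lam_pos_def\<close>)

lemma (in based_root_sys) halfsum_R_lam_pos_minus_weyl:
  assumes "prime_ideal_S \<Omega>" and "w \<in> weyl R" and "w ` R_lam R \<Omega> = R_lam R \<Omega>"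
  shows "halfsum (R_lam_pos R B \<Omega>) - w (halfsum (R_lam_pos R B \<Omega>))
    = \<Sum>(R_lam_pos R B \<Omega> - w ` R_lam_pos R B \<Omega>)"
proof -
  let ?P = "R_lam_pos R B \<Omega>"
  let ?N = "?P - w ` ?P"
  have "\<Sum>?P - (\<Sum>\<alpha>\<in>?P. w \<alpha>) = \<Sum>?N + \<Sum>?N"
  proof (rule sum_diff_sum_odd_image)
    show "finite ?P"
      using finite_pos_roots by (rule finite_subset[rotated]) (auto simp: R_lam_pos_def)
    show "- \<alpha> \<notin> ?P" if "\<alpha> \<in> ?P" for \<alpha>
      using pos_root_uminus_not_pos that by (auto simp: R_lam_pos_def)
    show "inj w"
      using weyl_bij[OF assms(2)] by (rule bij_is_inj)
    show "w (- \<alpha>) = - w \<alpha>" for \<alpha>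
      using weyl_vlinear[OF assms(2)] by (rule vlinear_uminus)
    show "w ` (?P \<union> uminus ` ?P) = ?P \<union> uminus ` ?P"
      using assms(3) by (simp add: R_lam_eq_pos_union_uminus[OF assms(1)])
  qed
  moreover have "w (halfsum ?P) = vscale (1/2) (\<Sum>\<alpha>\<in>?P. w \<alpha>)"
    using weyl_vlinear[OF assms(2)]
    by (simp add: halfsum_def vsum_eq_sum vlinear_def vlinear_sum)
  ultimately show ?thesis
    by (simp add: halfsum_def vsum_eq_sum fun_eq_iff algebra_simps)
qed

theorem mainTheorem15:
  fixes R B :: "('n::finite \<Rightarrow> 'f::field_char_0) set"
    and \<Omega> :: "(('n \<Rightarrow> 'f) \<Rightarrow> 'f) set"
    and w :: "('n \<Rightarrow> 'f) \<Rightarrow> ('n \<Rightarrow> 'f)"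
  assumes "alg_closed_type TYPE('f)"
    and "root_system R"
    and "is_base R B"
    and "prime_ideal_S \<Omega>"
    and "strongly_dominant R B \<Omega>"
    and "w \<in> weyl R"
    and "w ` R_lam R \<Omega> = R_lam R \<Omega>"
    and "\<not> (w ` B_lam R B \<Omega> \<subseteq> R_lam_pos R B \<Omega>)"
  shows "\<exists>c::rat. c > 0 \<and>
    dot_S R B w (as_S (hof R (halfsum (R_lam_pos R B \<Omega>)))) =
      (\<lambda>\<xi>. lin_S w (as_S (hof R (halfsum (R_lam_pos R B \<Omega>)))) \<xi> - of_rat c)"
proof -
  interpret based_root_sys R B
    using assms(2,3) by unfold_locales
  let ?P = "R_lam_pos R B \<Omega>"
  let ?N = "?P - w ` ?P"
  have "finite ?N" "?N \<subseteq> pos_roots R B"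
    using finite_pos_roots by (auto simp: R_lam_pos_def intro: finite_subset)
  moreover have "?N \<noteq> {}"
    using R_lam_pos_diff_weyl_nonempty[OF assms(6,8)] .
  ultimately obtain c where "c > 0" "pair rho (hof R (\<Sum>?N)) = of_rat c"
    using pair_rho_hof_sum_pos_roots by blast
  moreover have "halfsum ?P - w (halfsum ?P) = \<Sum>?N"
    using halfsum_R_lam_pos_minus_weyl[OF assms(4,6,7)] .
  ultimately show ?thesis
    using dot_S_as_S_hof[OF assms(6)] by auto
qed

end
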